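(* Let $\Gamma=(H,\iota,\sigma,m)$ be a Brauer graph, $H'\subseteq H$ stable under $\iota$, and $(h_1,r_1)$, $(h_2,r_2)$ two distinct maximal sectors of elements of $H'$ in $\Gamma$. For any admissible grading $d:H\to\mathbb{Z}/\overline m\mathbb{Z}$ of $\Gamma$, $$\mu^+_{(h_1,r_1)}\big(\mu^+_{(h_2,r_2)}(\Gamma,d)\big)=\mu^+_{(h_2,r_2)}\big(\mu^+_{(h_1,r_1)}(\Gamma,d)\big).$$
   Context: A Brauer graph $\Gamma=(H,\iota,\sigma,m)$: $H$ finite set, $\iota$ fixed-point-free involution, $\sigma$ a permutation, $m:H\to\mathbb{Z}_{>0}$ constant on $\sigma$-orbits; $\overline m=\mathrm{lcm}\{m(h)\}$. A grading $d:H\to\mathbb{Z}/\overline m\mathbb{Z}$ is admissible if for each $\sigma$-orbit $v$, $\sum_{h\in v}d(h)=\overline m/\widetilde m(v)$, $\widetilde m(v)$ being the value of $m$ on $v$; $(\Gamma,d)$ is then a $\mathbb{Z}/\overline m\mathbb{Z}$-graded Brauer graph. A sector of elements of $H'$ is a pair $(h,r)\in H\times\mathbb{Z}_{\ge0}$ with $r+1$ the least $r'\ge0$ such that $\sigma^{r'}h\notin H'$; it is maximal if moreover $\sigma^{-1}h\notin H'$. The graded generalized Kauer move of a sector is $\mu^+_{(h,r)}(\Gamma,d)=(H,\iota,\sigma_{(h,r)},m_{(h,r)},d_{(h,r)})$ with $\sigma_{(h,r)}=(h\ \ \sigma^{r+1}h)\circ\sigma\circ(\sigma^rh\ \ \iota\sigma^{r+1}h)$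 (permutations applied right to left), $m_{(h,r)}(\sigma^ih)=m(\iota\sigma^{r+1}h)$ for $0\le i\le r$ and $m_{(h,r)}=m$ elsewhere, and $d_{(h,r)}$ given by: $d_{(h,r)}(\iota\sigma^{r+1}h)=-\sum_{i=0}^rd(\sigma^ih)$; $d_{(h,r)}(\sigma^rh)=d(\iota\sigma^{r+1}h)+d(\sigma^rh)$ if $\iota\sigma^{r+1}h\ne\sigma^{-1}h$ and $=\sum_{i=-1}^rd(\sigma^ih)+d(\sigma^rh)$ otherwise; $d_{(h,r)}(\sigma^{-1}h)=\sum_{i=-1}^rd(\sigma^ih)$ if $\iota\sigma^{r+1}h\neq\sigma^{-1}h$ and $=-\sum_{i=0}^rd(\sigma^ih)$ otherwise; $d_{(h,r)}(h')=d(h')$ for all other $h'$. The result is again a graded Brauer graph, and a maximal sector of $\Gamma$ distinct from $(h,r)$ remains a sector of the moved graph, so the iterated moves in the claim are defined. *)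

theory Defs
  imports "HOL-Combinatorics.Permutations" "HOL-Number_Theory.Cong"
begin

text \<open>A Brauer graph (H, iota, sigma, m). The permutations iota and sigma are total
functions on the ambient type that permute H (identity outside H); m is only
relevant on H.\<close>

definition brauer_graph ::
  "'a set \<Rightarrow> ('a \<Rightarrow> 'a) \<Rightarrow> ('a \<Rightarrow> 'a) \<Rightarrow> ('a \<Rightarrow> nat) \<Rightarrow> bool" where
  "brauer_graph H \<iota> \<sigma> m \<longleftrightarrow>
     finite H \<and> \<iota> permutes H \<and> (\<forall>h\<in>H. \<iota> h \<noteq> h \<and> \<iota> (\<iota> h) = h) \<and>
     \<sigma> permutes H \<and> (\<forall>h\<in>H. 0 < m h) \<and> (\<forall>h\<in>H. m (\<sigma> h) = m h)"

definition mbar :: "'a set \<Rightarrow> ('a \<Rightarrow> nat) \<Rightarrow> nat" where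
  "mbar H m = Lcm (m ` H)"

definition sigma_orbit :: "('a \<Rightarrow> 'a) \<Rightarrow> 'a \<Rightarrow> 'a set" where
  "sigma_orbit \<sigma> h = {(\<sigma> ^^ k) h | k. True}"

text \<open>Gradings take values in Z/mbar Z, represented by integers; all equalities of
grades are read modulo mbar.\<close>
definition admissible_grading ::
  "'a set \<Rightarrow> ('a \<Rightarrow> 'a) \<Rightarrow> ('a \<Rightarrow> nat) \<Rightarrow> ('a \<Rightarrow> int) \<Rightarrow> bool" where
  "admissible_grading H \<sigma> m d \<longleftrightarrow>
     (\<forall>h\<in>H. [(\<Sum>x\<in>sigma_orbit \<sigma> h. d x) = int (mbar H m div m h)] (mod int (mbar H m)))"

definition sector :: "'a set \<Rightarrow> ('a \<Rightarrow> 'a) \<Rightarrow> 'a \<times> nat \<Rightarrow> bool" where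
  "sector H' \<sigma> hr \<longleftrightarrow> (case hr of (h, r) \<Rightarrow>
     (\<forall>i\<le>r. (\<sigma> ^^ i) h \<in> H') \<and> (\<sigma> ^^ Suc r) h \<notin> H')"

definition maximal_sector :: "'a set \<Rightarrow> ('a \<Rightarrow> 'a) \<Rightarrow> 'a \<times> nat \<Rightarrow> bool" where
  "maximal_sector H' \<sigma> hr \<longleftrightarrow> sector H' \<sigma> hr \<and> inv \<sigma> (fst hr) \<notin> H'"

definition kauer_move ::
  "('a \<Rightarrow> 'a) \<Rightarrow> ('a \<Rightarrow> 'a) \<times> ('a \<Rightarrow> nat) \<times> ('a \<Rightarrow> int) \<Rightarrow> 'a \<times> nat
     \<Rightarrow> ('a \<Rightarrow> 'a) \<times> ('a \<Rightarrow> nat) \<times> ('a \<Rightarrow> int)" where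
  "kauer_move \<iota> G hr = (case G of (\<sigma>, m, d) \<Rightarrow> case hr of (h, r) \<Rightarrow>
     let a = \<iota> ((\<sigma> ^^ Suc r) h);
         b = (\<sigma> ^^ r) h;
         c = inv \<sigma> h;
         S = (\<Sum>i\<le>r. d ((\<sigma> ^^ i) h));
         \<sigma>' = transpose h ((\<sigma> ^^ Suc r) h) \<circ> \<sigma> \<circ> transpose b a;
         m' = (\<lambda>x. if \<exists>i\<le>r. x = (\<sigma> ^^ i) h then m a else m x);
         d' = (\<lambda>x. if x = a then - S
                   else if x = b then (if a \<noteq> c then d a + d b else d c + S + d b)
                   else if x = c then (if a \<noteq> c then d c + S else - S)
                   else d x)
     in (\<sigma>', m', d'))"

end

theory Submission
  imports Defs
begin

text \<open>Two distinct maximal sectors of \<open>H'\<close> are disjoint, and everything a move reads or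
  rewrites outside its own sector (the successor \<open>e\<close> of the last half-edge, \<open>\<iota> e\<close>, and the
  predecessor of the first half-edge) lies outside \<open>H'\<close>, by maximality and \<open>\<iota>\<close>-stability of
  \<open>H'\<close>. So the move at one sector leaves \<open>\<sigma>\<close>, \<open>m\<close> and \<open>d\<close> unchanged along the other
  sector, the only interaction being that the predecessor of \<open>h\<^sub>1\<close> becomes
  \<open>(\<sigma> ^^ r\<^sub>2) h\<^sub>2\<close> when it was \<open>\<iota> e\<^sub>2\<close>. Both composites then reduce to the same
  data: the transpositions involved have disjoint supports, and the regradings commute exactly,
  so no admissibility and no reduction modulo \<open>mbar\<close> are needed.\<close>

lemma transpose_comp_commute:
  assumes "{a, b} \<inter> {c, d} = {}"
  shows "transpose a b \<circ> transpose c d = transpose c d \<circ> transpose a b"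
  using assms by (auto simp: fun_eq_iff transpose_def)

lemma transpose_conj_commute:
  assumes "{x1, y1} \<inter> {x2, y2} = {}" and "{u1, v1} \<inter> {u2, v2} = {}"
  shows "transpose x1 y1 \<circ> (transpose x2 y2 \<circ> \<sigma> \<circ> transpose u2 v2) \<circ> transpose u1 v1 =
    transpose x2 y2 \<circ> (transpose x1 y1 \<circ> \<sigma> \<circ> transpose u1 v1) \<circ> transpose u2 v2"
proof -
  have "transpose x1 y1 \<circ> (transpose x2 y2 \<circ> \<sigma> \<circ> transpose u2 v2) \<circ> transpose u1 v1 =
      (transpose x1 y1 \<circ> transpose x2 y2) \<circ> \<sigma> \<circ> (transpose u2 v2 \<circ> transpose u1 v1)"
    by (simp add: comp_assoc)
  also have "\<dots> = (transpose x2 y2 \<circ> transpose x1 y1) \<circ> \<sigma> \<circ> (transpose u1 v1 \<circ> transpose u2 v2)"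
    using assms by (simp add: transpose_comp_commute Int_commute)
  also have "\<dots> = transpose x2 y2 \<circ> (transpose x1 y1 \<circ> \<sigma> \<circ> transpose u1 v1) \<circ> transpose u2 v2"
    by (simp add: comp_assoc)
  finally show ?thesis .
qed

lemma sector_length_unique:
  assumes "sector H' \<sigma> (h, r)" and "sector H' \<sigma> (h, r')"
  shows "r = r'"
proof (rule ccontr)
  assume "r \<noteq> r'"
  then have "Suc r \<le> r' \<or> Suc r' \<le> r"
    by linarith
  then show False
    using assms unfolding sector_def by auto
qed

lemma maximal_sector_not_entered:
  assumes "inj \<sigma>" and "maximal_sector H' \<sigma> (h, r)" and "sector H' \<sigma> (h', r')" and "k \<le> r'"
  shows "(\<sigma> ^^ Suc k) h' \<noteq> h"
proof
  assume "(\<sigma> ^^ Suc k) h' = h"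
  then have "inv \<sigma> h = (\<sigma> ^^ k) h'"
    using \<open>inj \<sigma>\<close> by (metis funpow.simps(2) comp_apply inv_f_f)
  moreover have "(\<sigma> ^^ k) h' \<in> H'"
    using assms(3,4) unfolding sector_def by simp
  ultimately show False
    using assms(2) unfolding maximal_sector_def by simp
qed

lemma maximal_sectors_disjoint:
  assumes "inj \<sigma>" and "maximal_sector H' \<sigma> (h1, r1)" and "maximal_sector H' \<sigma> (h2, r2)"
    and "(h1, r1) \<noteq> (h2, r2)" and "i \<le> r1" and "j \<le> r2"
  shows "(\<sigma> ^^ i) h1 \<noteq> (\<sigma> ^^ j) h2"
proof -
  have ordered: "(\<sigma> ^^ i) h1 \<noteq> (\<sigma> ^^ (i + k)) h2"
    if m1: "maximal_sector H' \<sigma> (h1, r1)" and m2: "maximal_sector H' \<sigma> (h2, r2)"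
      and "(h1, r1) \<noteq> (h2, r2)" and "i + k \<le> r2" for h1 r1 h2 r2 i k
  proof
    assume "(\<sigma> ^^ i) h1 = (\<sigma> ^^ (i + k)) h2"
    then have "(\<sigma> ^^ i) h1 = (\<sigma> ^^ i) ((\<sigma> ^^ k) h2)"
      by (simp add: funpow_add)
    then have start: "h1 = (\<sigma> ^^ k) h2"
      using inj_fn[OF \<open>inj \<sigma>\<close>, of i] by (simp add: inj_eq)
    have m2_sector: "sector H' \<sigma> (h2, r2)"
      using m2 unfolding maximal_sector_def by simp
    show False
    proof (cases k)
      case 0
      then have "h1 = h2"
        using start by simp
      moreover have "r1 = r2"
        using sector_length_unique[of H' \<sigma> h1 r1 r2] m1 m2_sector \<open>h1 = h2\<close>
        unfolding maximal_sector_def by simp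
      ultimately show False
        using that(3) by simp
    next
      case (Suc k')
      then show False
        using start maximal_sector_not_entered[OF \<open>inj \<sigma>\<close> m1 m2_sector, of k'] that(4) by simp
    qed
  qed
  show ?thesis
  proof (cases "i \<le> j")
    case True
    then show ?thesis
      using ordered[OF assms(2-4), of i "j - i"] assms(6) by simp
  next
    case False
    then show ?thesis
      using ordered[OF assms(3,2), of j "i - j"] assms(4,5) by (simp add: eq_commute)
  qed
qed

definition kauer_perm :: "('a \<Rightarrow> 'a) \<Rightarrow> ('a \<Rightarrow> 'a) \<Rightarrow> 'a \<times> nat \<Rightarrow> 'a \<Rightarrow> 'a" where
  "kauer_perm \<iota> \<sigma> hr = (case hr of (h, r) \<Rightarrow>
     transpose h ((\<sigma> ^^ Suc r) h) \<circ> \<sigma> \<circ> transpose ((\<sigma> ^^ r) h) (\<iota> ((\<sigma> ^^ Suc r) h)))"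

definition kauer_regrade :: "('a \<Rightarrow> int) \<Rightarrow> 'a \<Rightarrow> 'a \<Rightarrow> 'a \<Rightarrow> int \<Rightarrow> 'a \<Rightarrow> int" where
  "kauer_regrade d a b c S = (\<lambda>x. if x = a then - S
     else if x = b then (if a \<noteq> c then d a + d b else d c + S + d b)
     else if x = c then (if a \<noteq> c then d c + S else - S)
     else d x)"

lemma kauer_move_eq:
  "kauer_move \<iota> (\<sigma>, m, d) (h, r) =
    (kauer_perm \<iota> \<sigma> (h, r),
     \<lambda>x. if \<exists>i\<le>r. x = (\<sigma> ^^ i) h then m (\<iota> ((\<sigma> ^^ Suc r) h)) else m x,
     kauer_regrade d (\<iota> ((\<sigma> ^^ Suc r) h)) ((\<sigma> ^^ r) h) (inv \<sigma> h) (\<Sum>i\<le>r. d ((\<sigma> ^^ i) h)))"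
  by (simp add: kauer_move_def kauer_perm_def kauer_regrade_def Let_def del: funpow.simps)

lemma bij_kauer_perm: "bij \<sigma> \<Longrightarrow> bij (kauer_perm \<iota> \<sigma> hr)"
  by (simp add: kauer_perm_def bij_comp split: prod.split)

lemma kauer_regrade_apply_other: "x \<notin> {a, b, c} \<Longrightarrow> kauer_regrade d a b c S x = d x"
  by (simp add: kauer_regrade_def)

lemma kauer_regrade_commute:
  assumes "a1 \<noteq> a2" and "b1 \<noteq> b2" and "c1 \<noteq> c2" and "{a1, c1, a2, c2} \<inter> {b1, b2} = {}"
  shows "kauer_regrade (kauer_regrade d a2 b2 c2 S2) a1 b1 (if c1 = a2 then b2 else c1) S1 =
    kauer_regrade (kauer_regrade d a1 b1 c1 S1) a2 b2 (if c2 = a1 then b1 else c2) S2"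
proof
  fix x
  show "kauer_regrade (kauer_regrade d a2 b2 c2 S2) a1 b1 (if c1 = a2 then b2 else c1) S1 x =
    kauer_regrade (kauer_regrade d a1 b1 c1 S1) a2 b2 (if c2 = a1 then b1 else c2) S2 x"
    using assms by (cases "c1 = a2"; cases "c2 = a1") (auto simp: kauer_regrade_def)
qed

locale brauer_maximal_sector =
  fixes H H' :: "'a set" and \<iota> \<sigma> :: "'a \<Rightarrow> 'a" and m :: "'a \<Rightarrow> nat" and h :: 'a and r :: nat
  assumes brauer: "brauer_graph H \<iota> \<sigma> m"
    and H'_subset: "H' \<subseteq> H" and iota_H': "\<iota> ` H' \<subseteq> H'"
    and maximal: "maximal_sector H' \<sigma> (h, r)"
begin

lemma sigma_permutes: "\<sigma> permutes H"
  using brauer unfolding brauer_graph_def by simp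

lemma inj_sigma: "inj \<sigma>"
  using permutes_inj[OF sigma_permutes] .

lemma inj_iota: "inj \<iota>"
  using brauer permutes_inj unfolding brauer_graph_def by blast

lemma sector_in_H': "i \<le> r \<Longrightarrow> (\<sigma> ^^ i) h \<in> H'"
  using maximal unfolding maximal_sector_def sector_def by simp

lemma sector_start_in_H': "h \<in> H'"
  using sector_in_H'[of 0] by simp

lemma sector_last_in_H': "(\<sigma> ^^ r) h \<in> H'"
  using sector_in_H' by simp

lemma sector_end_notin_H': "(\<sigma> ^^ Suc r) h \<notin> H'"
  using maximal unfolding maximal_sector_def sector_def by simp

lemma sector_pred_notin_H': "inv \<sigma> h \<notin> H'"
  using maximal unfolding maximal_sector_def by simp

lemma sigma_sector_pred: "\<sigma> (inv \<sigma> h) = h"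
  using permutes_inverses(1)[OF sigma_permutes] .

lemma iota_sector_end_notin_H': "\<iota> ((\<sigma> ^^ Suc r) h) \<notin> H'"
proof
  have "h \<in> H"
    using sector_start_in_H' H'_subset by auto
  then have "(\<sigma> ^^ Suc r) h \<in> H"
    using permutes_in_funpow_image[OF sigma_permutes] by blast
  then have "\<iota> (\<iota> ((\<sigma> ^^ Suc r) h)) = (\<sigma> ^^ Suc r) h"
    using brauer unfolding brauer_graph_def by blast
  moreover assume "\<iota> ((\<sigma> ^^ Suc r) h) \<in> H'"
  ultimately show False
    using iota_H' sector_end_notin_H' by (metis image_subset_iff)
qed

lemma kauer_perm_apply_H':
  assumes "y \<in> H'" and "y \<noteq> (\<sigma> ^^ r) h"
  shows "kauer_perm \<iota> \<sigma> (h, r) y = \<sigma> y"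
proof -
  have "y \<noteq> \<iota> ((\<sigma> ^^ Suc r) h)"
    using assms(1) iota_sector_end_notin_H' by blast
  moreover have "\<sigma> y \<noteq> h"
    using assms(1) sector_pred_notin_H' sigma_sector_pred inj_sigma by (metis injD)
  moreover have "\<sigma> y \<noteq> (\<sigma> ^^ Suc r) h"
    using assms(2) inj_sigma by (auto dest: injD)
  ultimately show ?thesis
    using assms(2) by (simp add: kauer_perm_def)
qed

end

locale brauer_two_maximal_sectors =
  s1: brauer_maximal_sector H H' \<iota> \<sigma> m h1 r1 + s2: brauer_maximal_sector H H' \<iota> \<sigma> m h2 r2
  for H H' \<iota> \<sigma> m h1 r1 h2 r2 +
  assumes distinct_sectors: "(h1, r1) \<noteq> (h2, r2)"
begin

lemma sectors_disjoint: "i \<le> r1 \<Longrightarrow> j \<le> r2 \<Longrightarrow> (\<sigma> ^^ i) h1 \<noteq> (\<sigma> ^^ j) h2"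
  using maximal_sectors_disjoint[OF s1.inj_sigma s1.maximal s2.maximal distinct_sectors] .

lemma funpow_kauer_perm_other:
  "i \<le> Suc r1 \<Longrightarrow> (kauer_perm \<iota> \<sigma> (h2, r2) ^^ i) h1 = (\<sigma> ^^ i) h1"
proof (induction i)
  case (Suc i)
  then have "(\<sigma> ^^ i) h1 \<in> H'" and "(\<sigma> ^^ i) h1 \<noteq> (\<sigma> ^^ r2) h2"
    using s1.sector_in_H' sectors_disjoint by simp_all
  have "(kauer_perm \<iota> \<sigma> (h2, r2) ^^ Suc i) h1 = kauer_perm \<iota> \<sigma> (h2, r2) ((\<sigma> ^^ i) h1)"
    using Suc by simp
  also have "\<dots> = (\<sigma> ^^ Suc i) h1"
    using s2.kauer_perm_apply_H' \<open>(\<sigma> ^^ i) h1 \<in> H'\<close> \<open>(\<sigma> ^^ i) h1 \<noteq> (\<sigma> ^^ r2) h2\<close> by simp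
  finally show ?case .
qed simp

lemma inv_kauer_perm_other:
  "inv (kauer_perm \<iota> \<sigma> (h2, r2)) h1 =
    (if inv \<sigma> h1 = \<iota> ((\<sigma> ^^ Suc r2) h2) then (\<sigma> ^^ r2) h2 else inv \<sigma> h1)"
    (is "_ = ?c")
proof -
  have "h1 \<noteq> h2" and "h1 \<noteq> (\<sigma> ^^ Suc r2) h2"
    using sectors_disjoint[of 0 0] s1.sector_start_in_H' s2.sector_end_notin_H' by auto
  then have "transpose h2 ((\<sigma> ^^ Suc r2) h2) h1 = h1"
    by simp
  moreover have "inv \<sigma> h1 \<noteq> (\<sigma> ^^ r2) h2"
    using s1.sector_pred_notin_H' s2.sector_in_H' by auto
  ultimately have "kauer_perm \<iota> \<sigma> (h2, r2) ?c = h1"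
    using s1.sigma_sector_pred by (cases "inv \<sigma> h1 = \<iota> ((\<sigma> ^^ Suc r2) h2)") (simp_all add: kauer_perm_def)
  then show ?thesis
    using bij_kauer_perm[OF permutes_bij[OF s1.sigma_permutes]] by (simp add: bij_is_inj inv_f_eq)
qed

lemma kauer_move_after_other:
  defines "e1 \<equiv> (\<sigma> ^^ Suc r1) h1" and "e2 \<equiv> (\<sigma> ^^ Suc r2) h2"
  shows "kauer_move \<iota> (kauer_move \<iota> (\<sigma>, m, d) (h2, r2)) (h1, r1) =
    (transpose h1 e1 \<circ> kauer_perm \<iota> \<sigma> (h2, r2) \<circ> transpose ((\<sigma> ^^ r1) h1) (\<iota> e1),
     \<lambda>x. if \<exists>i\<le>r1. x = (\<sigma> ^^ i) h1 then m (\<iota> e1)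
         else if \<exists>i\<le>r2. x = (\<sigma> ^^ i) h2 then m (\<iota> e2) else m x,
     kauer_regrade (kauer_regrade d (\<iota> e2) ((\<sigma> ^^ r2) h2) (inv \<sigma> h2) (\<Sum>i\<le>r2. d ((\<sigma> ^^ i) h2)))
       (\<iota> e1) ((\<sigma> ^^ r1) h1) (if inv \<sigma> h1 = \<iota> e2 then (\<sigma> ^^ r2) h2 else inv \<sigma> h1)
       (\<Sum>i\<le>r1. d ((\<sigma> ^^ i) h1)))"
proof -
  let ?\<sigma>2 = "kauer_perm \<iota> \<sigma> (h2, r2)"
  let ?d2 = "kauer_regrade d (\<iota> e2) ((\<sigma> ^^ r2) h2) (inv \<sigma> h2) (\<Sum>i\<le>r2. d ((\<sigma> ^^ i) h2))"
  have sector1: "(?\<sigma>2 ^^ i) h1 = (\<sigma> ^^ i) h1" if "i \<le> r1" for i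
    using funpow_kauer_perm_other that by simp
  have end1: "(?\<sigma>2 ^^ Suc r1) h1 = e1"
    unfolding e1_def by (rule funpow_kauer_perm_other) simp
  have perm1: "kauer_perm \<iota> ?\<sigma>2 (h1, r1) = transpose h1 e1 \<circ> ?\<sigma>2 \<circ> transpose ((\<sigma> ^^ r1) h1) (\<iota> e1)"
    by (simp only: kauer_perm_def[of \<iota> ?\<sigma>2] prod.case end1 sector1[OF order_refl])
  have "?d2 ((\<sigma> ^^ i) h1) = d ((\<sigma> ^^ i) h1)" if "i \<le> r1" for i
  proof (rule kauer_regrade_apply_other)
    show "(\<sigma> ^^ i) h1 \<notin> {\<iota> e2, (\<sigma> ^^ r2) h2, inv \<sigma> h2}"
      using that s1.sector_in_H' sectors_disjoint s2.iota_sector_end_notin_H' s2.sector_pred_notin_H'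
      unfolding e2_def by fastforce
  qed
  then have grading1: "(\<Sum>i\<le>r1. ?d2 ((?\<sigma>2 ^^ i) h1)) = (\<Sum>i\<le>r1. d ((\<sigma> ^^ i) h1))"
    using sector1 by simp
  have in_sector1: "(\<exists>i\<le>r1. x = (?\<sigma>2 ^^ i) h1) \<longleftrightarrow> (\<exists>i\<le>r1. x = (\<sigma> ^^ i) h1)" for x
    using sector1 by auto
  have "\<not> (\<exists>i\<le>r2. \<iota> e1 = (\<sigma> ^^ i) h2)"
    using s1.iota_sector_end_notin_H' s2.sector_in_H' unfolding e1_def by auto
  then show ?thesis
    unfolding kauer_move_eq[of \<iota> \<sigma> m d h2 r2, folded e2_def] kauer_move_eq[of \<iota> ?\<sigma>2]
    unfolding perm1 end1 sector1[OF order_refl] grading1 in_sector1 inv_kauer_perm_other[folded e2_def]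
    by auto
qed

lemma sector_boundaries_distinct:
  shows "h1 \<noteq> h2" and "(\<sigma> ^^ r1) h1 \<noteq> (\<sigma> ^^ r2) h2"
    and "(\<sigma> ^^ Suc r1) h1 \<noteq> (\<sigma> ^^ Suc r2) h2"
    and "\<iota> ((\<sigma> ^^ Suc r1) h1) \<noteq> \<iota> ((\<sigma> ^^ Suc r2) h2)"
    and "inv \<sigma> h1 \<noteq> inv \<sigma> h2"
proof -
  show "h1 \<noteq> h2" and "(\<sigma> ^^ r1) h1 \<noteq> (\<sigma> ^^ r2) h2"
    using sectors_disjoint[of 0 0] sectors_disjoint[of r1 r2] by simp_all
  then show "(\<sigma> ^^ Suc r1) h1 \<noteq> (\<sigma> ^^ Suc r2) h2"
    using s1.inj_sigma by (auto dest: injD)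
  then show "\<iota> ((\<sigma> ^^ Suc r1) h1) \<noteq> \<iota> ((\<sigma> ^^ Suc r2) h2)"
    using s1.inj_iota by (auto dest: injD)
  show "inv \<sigma> h1 \<noteq> inv \<sigma> h2"
    using \<open>h1 \<noteq> h2\<close> s1.sigma_sector_pred s2.sigma_sector_pred by metis
qed

lemma kauer_moves_commute:
  "kauer_move \<iota> (kauer_move \<iota> (\<sigma>, m, d) (h2, r2)) (h1, r1) =
    kauer_move \<iota> (kauer_move \<iota> (\<sigma>, m, d) (h1, r1)) (h2, r2)"
proof -
  interpret swapped: brauer_two_maximal_sectors H H' \<iota> \<sigma> m h2 r2 h1 r1
    using s1.brauer_maximal_sector_axioms s2.brauer_maximal_sector_axioms distinct_sectors
    by (auto simp: brauer_two_maximal_sectors_def brauer_two_maximal_sectors_axioms_def)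
  let ?e1 = "(\<sigma> ^^ Suc r1) h1" and ?e2 = "(\<sigma> ^^ Suc r2) h2"
  let ?b1 = "(\<sigma> ^^ r1) h1" and ?b2 = "(\<sigma> ^^ r2) h2"
  note boundaries = sector_boundaries_distinct
    s1.sector_start_in_H' s2.sector_start_in_H' s1.sector_last_in_H' s2.sector_last_in_H'
    s1.sector_end_notin_H' s2.sector_end_notin_H' s1.iota_sector_end_notin_H'
    s2.iota_sector_end_notin_H' s1.sector_pred_notin_H' s2.sector_pred_notin_H'
  have perm: "transpose h1 ?e1 \<circ> kauer_perm \<iota> \<sigma> (h2, r2) \<circ> transpose ?b1 (\<iota> ?e1) =
      transpose h2 ?e2 \<circ> kauer_perm \<iota> \<sigma> (h1, r1) \<circ> transpose ?b2 (\<iota> ?e2)"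
    unfolding kauer_perm_def prod.case
    by (rule transpose_conj_commute)
      (use boundaries in auto)
  have "\<not> ((\<exists>i\<le>r1. x = (\<sigma> ^^ i) h1) \<and> (\<exists>i\<le>r2. x = (\<sigma> ^^ i) h2))" for x
    using sectors_disjoint by blast
  then have mult: "(\<lambda>x. if \<exists>i\<le>r1. x = (\<sigma> ^^ i) h1 then m (\<iota> ?e1)
        else if \<exists>i\<le>r2. x = (\<sigma> ^^ i) h2 then m (\<iota> ?e2) else m x) =
      (\<lambda>x. if \<exists>i\<le>r2. x = (\<sigma> ^^ i) h2 then m (\<iota> ?e2)
        else if \<exists>i\<le>r1. x = (\<sigma> ^^ i) h1 then m (\<iota> ?e1) else m x)"
    by (auto simp: fun_eq_iff)
  have grading: "kauer_regrade (kauer_regrade d (\<iota> ?e2) ?b2 (inv \<sigma> h2) S2)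
        (\<iota> ?e1) ?b1 (if inv \<sigma> h1 = \<iota> ?e2 then ?b2 else inv \<sigma> h1) S1 =
      kauer_regrade (kauer_regrade d (\<iota> ?e1) ?b1 (inv \<sigma> h1) S1)
        (\<iota> ?e2) ?b2 (if inv \<sigma> h2 = \<iota> ?e1 then ?b1 else inv \<sigma> h2) S2" for S1 S2
    by (rule kauer_regrade_commute)
      (use boundaries in auto)
  show ?thesis
    unfolding kauer_move_after_other swapped.kauer_move_after_other perm mult grading ..
qed

end

theorem proposition2p16:
  fixes H H' :: "'a set" and \<iota> \<sigma> :: "'a \<Rightarrow> 'a" and m :: "'a \<Rightarrow> nat"
    and d :: "'a \<Rightarrow> int" and h1 h2 :: 'a and r1 r2 :: nat
  assumes "brauer_graph H \<iota> \<sigma> m"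
    and "H' \<subseteq> H" and "\<iota> ` H' \<subseteq> H'"
    and "maximal_sector H' \<sigma> (h1, r1)" and "maximal_sector H' \<sigma> (h2, r2)"
    and "(h1, r1) \<noteq> (h2, r2)"
    and "admissible_grading H \<sigma> m d"
  shows "let G12 = kauer_move \<iota> (kauer_move \<iota> (\<sigma>, m, d) (h2, r2)) (h1, r1);
             G21 = kauer_move \<iota> (kauer_move \<iota> (\<sigma>, m, d) (h1, r1)) (h2, r2)
         in fst G12 = fst G21 \<and> fst (snd G12) = fst (snd G21) \<and>
            (\<forall>x\<in>H. [snd (snd G12) x = snd (snd G21) x] (mod int (mbar H m)))"
proof -
  interpret brauer_two_maximal_sectors H H' \<iota> \<sigma> m h1 r1 h2 r2
    using assms(1-6) by unfold_locales
  show ?thesis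
    using kauer_moves_commute[of d] by (simp add: Let_def)
qed

end
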